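(* Let $f$ and $g$ be germs at $0\in\mathbb{C}$ of holomorphic functions of one variable with $v(f)\geq 3$ and $v(g)\geq 2$, and let $I=\big(f(z_1)-z_2z_3,\,g(z_2)\big)\subset\mathcal{O}_3$. Then $\mathbf{T}_2(I)\leq\max\{v(f),v(g)\}$ and $\beta_2(I)=\max\{v(f),\,v(g)(v(f)-1)\}=v(g)(v(f)-1)$.
   Context: $\mathcal{O}_n$ denotes the local ring of germs at $0\in\mathbb{C}^n$ of holomorphic functions. $\Gamma$ denotes the set of non-constant germs of holomorphic maps $z\colon(\mathbb{C},0)\to(\mathbb{C}^n,0)$; $v(z)$ is the order of vanishing of $z$ at $0$; for a one-variable germ $h$, $v(h)$ is its order of vanishing at $0$ ($v(0)=\infty$). For an ideal $I\subset\mathcal{O}_n$, $\mathbf{T}_1(I)=\sup_{z\in\Gamma}\inf_{h\in I}\frac{v(h\circ z)}{v(z)}$, and $\mathbf{T}_q(I)=\inf_{\{w_1,\dots,w_{q-1}\}}\mathbf{T}_1(I,w_1,\dots,w_{q-1})$ over all linear functions $w_j$, where $(I,w_1,\dots,w_{q-1})$ is the ideal generated by $I$ and the $w_j$. The generic value $\beta_q(I)$ is the unique $\beta\in\mathbb{R}\cup\{\infty\}$ such that there is a non-empty Zariski open subset $W$ of the Grassmannian $G^{n-q+1}$ of $(n-q+1)$-dimensional linear subspaces of $\mathbb{C}^n$ with $\mathbf{T}_1(I,w_1,\dots,w_{q-1})=\beta$ whenever $\{w_1=\dots=w_{q-1}=0\}\in W$. *)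

theory Defs
  imports "HOL-Analysis.Analysis"
begin

text \<open>Order of vanishing at 0 of a one-variable function (meant for functions holomorphic
  near 0): the least k with a non-zero k-th derivative at 0, and \<infinity> if there is none
  (i.e. the germ is 0).\<close>
definition ord0 :: "(complex \<Rightarrow> complex) \<Rightarrow> enat" where
  "ord0 h = (if \<exists>k. (deriv ^^ k) h 0 \<noteq> 0
             then enat (LEAST k. (deriv ^^ k) h 0 \<noteq> 0) else \<infinity>)"

definition holo1_near0 :: "(complex \<Rightarrow> complex) \<Rightarrow> bool" where
  "holo1_near0 h \<longleftrightarrow> (\<exists>r>0. h holomorphic_on ball 0 r)"

text \<open>A function on C^n that is holomorphic near 0: complex differentiable
  (real Frechet derivative that is complex linear) at every point of a ball around 0.
  Such functions represent the elements of O_n.\<close>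
definition holo_near0 :: "(complex^'n \<Rightarrow> complex) \<Rightarrow> bool" where
  "holo_near0 h \<longleftrightarrow> (\<exists>r>0. \<forall>x\<in>ball 0 r. \<exists>D. (h has_derivative D) (at x) \<and>
                                      (\<forall>c v. D (c *s v) = c * D v))"

definition curves :: "(complex \<Rightarrow> complex^'n) set" where
  "curves = {z. z 0 = 0 \<and> (\<forall>j. holo1_near0 (\<lambda>t. z t $ j)) \<and> (\<exists>j. ord0 (\<lambda>t. z t $ j) \<noteq> \<infinity>)}"

definition ordc :: "(complex \<Rightarrow> complex^'n) \<Rightarrow> enat" where
  "ordc z = Min (range (\<lambda>j. ord0 (\<lambda>t. z t $ j)))"

definition gen_ideal :: "(complex^'n \<Rightarrow> complex) set \<Rightarrow> (complex^'n \<Rightarrow> complex) set" where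
  "gen_ideal G = {h. \<exists>gs as. length as = length gs \<and> set gs \<subseteq> G \<and> (\<forall>a\<in>set as. holo_near0 a) \<and>
       (\<exists>r>0. \<forall>x\<in>ball 0 r. h x = (\<Sum>i<length gs. (as ! i) x * (gs ! i) x))}"

definition linf :: "complex^'n \<Rightarrow> complex^'n \<Rightarrow> complex" where
  "linf c x = (\<Sum>j\<in>UNIV. c $ j * x $ j)"

definition T1 :: "(complex^'n \<Rightarrow> complex) set \<Rightarrow> ereal" where
  "T1 I = (SUP z\<in>curves. INF h\<in>I. ereal_of_enat (ord0 (h \<circ> z)) / ereal_of_enat (ordc z))"

definition add_lin :: "(complex^'n \<Rightarrow> complex) set \<Rightarrow> nat \<Rightarrow> (nat \<Rightarrow> complex^'n)
                         \<Rightarrow> (complex^'n \<Rightarrow> complex) set" where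
  "add_lin I k ws = gen_ideal (I \<union> {linf (ws i) | i. i < k})"

definition Tq :: "nat \<Rightarrow> (complex^'n \<Rightarrow> complex) set \<Rightarrow> ereal" where
  "Tq q I = (INF ws. T1 (add_lin I (q - 1) ws))"

definition lin_indep :: "nat \<Rightarrow> (nat \<Rightarrow> complex^'n) \<Rightarrow> bool" where
  "lin_indep k ws \<longleftrightarrow> (\<forall>c::nat \<Rightarrow> complex. (\<Sum>i<k. c i *s ws i) = 0 \<longrightarrow> (\<forall>i<k. c i = 0))"

definition zero_space :: "nat \<Rightarrow> (nat \<Rightarrow> complex^'n) \<Rightarrow> (complex^'n) set" where
  "zero_space k ws = {x. \<forall>i<k. linf (ws i) x = 0}"

text \<open>Grassmannian G^{n-k} of (n-k)-dimensional linear subspaces of C^n, each written as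
  the zero set of k independent linear forms.\<close>
definition grass :: "nat \<Rightarrow> (complex^'n) set set" where
  "grass k = {zero_space k ws | ws. lin_indep k ws}"

definition tuple_poly :: "nat \<Rightarrow> ((nat \<Rightarrow> complex^'n) \<Rightarrow> complex) \<Rightarrow> bool" where
  "tuple_poly k P \<longleftrightarrow> (\<exists>A c. finite A \<and>
      (\<forall>ws. P ws = (\<Sum>\<alpha>\<in>A. c \<alpha> * (\<Prod>i<k. \<Prod>j\<in>UNIV. (ws i $ j) ^ (\<alpha> i j)))))"

text \<open>A subset W of the Grassmannian is Zariski open iff its preimage in the (Zariski open)
  set of independent k-tuples is Zariski open, i.e. iff the set of k-tuples that are
  dependent or whose zero space is not in W is an algebraic subset of (C^n)^k.\<close>
definition zariski_open_grass :: "nat \<Rightarrow> (complex^'n) set set \<Rightarrow> bool" where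
  "zariski_open_grass k W \<longleftrightarrow> W \<subseteq> grass k \<and>
     (\<exists>F. (\<forall>P\<in>F. tuple_poly k P) \<and>
          (\<forall>ws. (\<not> lin_indep k ws \<or> zero_space k ws \<notin> W) \<longleftrightarrow> (\<forall>P\<in>F. P ws = 0)))"

definition is_generic_value :: "nat \<Rightarrow> (complex^'n \<Rightarrow> complex) set \<Rightarrow> ereal \<Rightarrow> bool" where
  "is_generic_value q I \<beta> \<longleftrightarrow> (\<exists>W. W \<noteq> {} \<and> zariski_open_grass (q - 1) W \<and>
      (\<forall>ws. lin_indep (q - 1) ws \<and> zero_space (q - 1) ws \<in> W \<longrightarrow> T1 (add_lin I (q - 1) ws) = \<beta>))"

definition beta :: "nat \<Rightarrow> (complex^'n \<Rightarrow> complex) set \<Rightarrow> ereal" where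
  "beta q I = (THE \<beta>. is_generic_value q I \<beta>)"

end

theory Submission
  imports Defs "HOL-Complex_Analysis.Complex_Singularities"
begin

text \<open>Lower bound: on a hyperplane w = a x1 + b x2 + c x3 with a c \<noteq> 0 one solves
  f(s) = x2 x3, w = 0 with x1 = s; eliminating x3 gives a quadratic for x2 whose small root
  has order v(f) - 1, because its discriminant divided by (a s)^2 is a unit. Along this smooth
  curve g(x2) vanishes to order v(g)(v(f) - 1) and the other generators vanish identically.
  Upper bound: along a curve of order m, either x2 has order at most (v(f) - 1) m and g(x2)
  gives the bound, or w has order at most m, or else x1 and x3 both have exact order m and
  f(x1) - x2 x3 has exact order v(f) m. Hyperplanes with all coefficients non-zero form a
  non-empty Zariski open set, which identifies beta_2. For the hyperplane x3 = 0 the ideal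
  contains f(x1), g(x2) and x3, and one of them has order at most max(v(f), v(g)) m along any
  curve of order m, which bounds T_2.\<close>

unbundle no fps_syntax

section \<open>Orders of vanishing by factorisation\<close>

text \<open>Factorisation versions of ord0 u \<ge> K and ord0 u = K: for germs holomorphic at 0 they are
  equivalent to these, and unlike the derivative-based ord0 they behave well under sums,
  products and composition.\<close>

definition vanishes_to :: "(complex \<Rightarrow> complex) \<Rightarrow> nat \<Rightarrow> bool" where
  "vanishes_to u K \<longleftrightarrow>
     (\<exists>r>0. \<exists>v. v holomorphic_on ball 0 r \<and> (\<forall>t\<in>ball 0 r. u t = t^K * v t))"

definition vanishes_exactly :: "(complex \<Rightarrow> complex) \<Rightarrow> nat \<Rightarrow> bool" where
  "vanishes_exactly u K \<longleftrightarrow>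
     (\<exists>r>0. \<exists>v. v holomorphic_on ball 0 r \<and> v 0 \<noteq> 0 \<and> (\<forall>t\<in>ball 0 r. u t = t^K * v t))"

lemma vanishes_exactly_imp_vanishes_to: "vanishes_exactly u K \<Longrightarrow> vanishes_to u K"
  unfolding vanishes_exactly_def vanishes_to_def by blast

lemma vanishes_exactly_id: "vanishes_exactly (\<lambda>t. t) 1"
  unfolding vanishes_exactly_def by (intro exI[of _ 1] conjI exI[of _ "\<lambda>_. 1"]) auto

lemma higher_deriv_power_factor_at_0:
  assumes r: "r > 0" and v: "v holomorphic_on ball 0 r" and u: "\<forall>t\<in>ball 0 r. u t = t^K * v t"
    and iK: "i \<le> K"
  shows "(deriv^^i) u 0 = (if i = K then fact K * v 0 else 0)"
proof -
  have ev: "eventually (\<lambda>x. u x = x^K * v x) (nhds 0)"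
    unfolding eventually_nhds by (intro exI[of _ "ball 0 r"]) (use u r in auto)
  have "(deriv^^i) u 0 = (deriv^^i) (\<lambda>w. w^K * v w) 0"
    by (rule higher_deriv_cong_ev[OF ev refl])
  also have "\<dots> = (\<Sum>j = 0..i. of_nat (i choose j) * (deriv ^^ j) (\<lambda>w. w^K) 0 * (deriv ^^ (i-j)) v 0)"
    by (rule higher_deriv_mult[of _ "ball 0 r"]) (use v r in \<open>auto intro!: holomorphic_intros\<close>)
  also have "\<dots> = (\<Sum>j = 0..i. if j = K then fact K * v 0 else 0)"
  proof (intro sum.cong refl)
    fix j assume j: "j \<in> {0..i}"
    have "(deriv ^^ j) (\<lambda>w. w^K) 0 = pochhammer (of_nat (Suc K - j)) j * (0-0::complex) ^ (K - j)"
      using higher_deriv_power[of j 0 K 0] by simp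
    then show "of_nat (i choose j) * (deriv ^^ j) (\<lambda>w. w^K) 0 * (deriv ^^ (i-j)) v 0 =
               (if j = K then fact K * v 0 else 0)"
      using j iK by (auto simp: pochhammer_fact)
  qed
  also have "\<dots> = (if i = K then fact K * v 0 else 0)"
    using iK by (auto simp: sum.delta)
  finally show ?thesis .
qed

lemma ord0_ge_if_vanishes_to:
  assumes "vanishes_to u K" shows "enat K \<le> ord0 u"
proof -
  obtain r v where r: "r > 0" and v: "v holomorphic_on ball 0 r" and u: "\<forall>t\<in>ball 0 r. u t = t^K * v t"
    using assms unfolding vanishes_to_def by blast
  have z: "(deriv^^i) u 0 = 0" if "i < K" for i
    using higher_deriv_power_factor_at_0[OF r v u, of i] that by simp
  show ?thesis
  proof (cases "\<exists>k. (deriv ^^ k) u 0 \<noteq> 0")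
    case True
    then have "(deriv ^^ (LEAST k. (deriv ^^ k) u 0 \<noteq> 0)) u 0 \<noteq> 0" by (rule LeastI_ex)
    then have "K \<le> (LEAST k. (deriv ^^ k) u 0 \<noteq> 0)" using z not_le by blast
    then show ?thesis using True by (simp add: ord0_def)
  qed (simp add: ord0_def)
qed

lemma ord0_eq_if_vanishes_exactly:
  assumes "vanishes_exactly u K" shows "ord0 u = enat K"
proof -
  obtain r v where r: "r > 0" and v: "v holomorphic_on ball 0 r" and v0: "v 0 \<noteq> 0"
    and u: "\<forall>t\<in>ball 0 r. u t = t^K * v t"
    using assms unfolding vanishes_exactly_def by blast
  have z: "(deriv^^i) u 0 = 0" if "i < K" for i
    using higher_deriv_power_factor_at_0[OF r v u, of i] that by simp
  have nz: "(deriv^^K) u 0 \<noteq> 0"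
    using higher_deriv_power_factor_at_0[OF r v u, of K] v0 by simp
  have "(LEAST k. (deriv ^^ k) u 0 \<noteq> 0) = K"
    by (rule Least_equality) (use nz z not_le in auto)
  then show ?thesis using nz by (auto simp: ord0_def)
qed

lemma ord0_infinite_imp_zero:
  assumes hol: "u holomorphic_on ball 0 r" and inf: "ord0 u = \<infinity>" and t: "t \<in> ball 0 r"
  shows "u t = 0"
proof -
  have "(deriv ^^ n) u 0 = 0" for n
    using inf by (auto simp: ord0_def split: if_splits)
  moreover have "(\<lambda>n. (deriv ^^ n) u 0 / fact n * (t - 0)^n) sums u t"
    by (rule holomorphic_power_series[OF hol t])
  ultimately show ?thesis by (simp add: sums_0 sums_unique2)
qed

lemma vanishes_exactly_if_ord0_eq:
  assumes r: "r > 0" and hol: "u holomorphic_on ball 0 r" and K: "ord0 u = enat K"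
  shows "vanishes_exactly u K"
proof -
  have ex: "\<exists>k. (deriv ^^ k) u 0 \<noteq> 0" using K by (auto simp: ord0_def split: if_splits)
  have K_def: "K = (LEAST k. (deriv ^^ k) u 0 \<noteq> 0)" using K ex by (simp add: ord0_def)
  have nz: "(deriv ^^ K) u 0 \<noteq> 0" unfolding K_def using ex by (rule LeastI_ex)
  have z: "(deriv ^^ i) u 0 = 0" if "i < K" for i
    using not_less_Least[of i "\<lambda>k. (deriv ^^ k) u 0 \<noteq> 0"] that unfolding K_def by blast
  show ?thesis
  proof (cases "K = 0")
    case True
    then show ?thesis using r hol nz unfolding vanishes_exactly_def
      by (intro exI[of _ r] conjI r exI[of _ u]) auto
  next
    case False
    obtain g r' where r': "0 < r'" and g: "g holomorphic_on ball 0 r'"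
      and fac: "\<And>w. w \<in> ball 0 r' \<Longrightarrow> u w - u 0 = (w - 0)^K * g w"
      and gnz: "\<And>w. w \<in> ball 0 r' \<Longrightarrow> g w \<noteq> 0"
    proof (rule holomorphic_factor_order_of_zero[OF hol open_ball _ _ nz])
      show "0 \<in> ball 0 r" using r by simp
      show "0 < K" using False by simp
      show "\<And>i. 0 < i \<Longrightarrow> i < K \<Longrightarrow> (deriv ^^ i) u 0 = 0" using z by simp
    qed (use that in blast)
    have "u 0 = 0" using z[of 0] False by simp
    then show ?thesis unfolding vanishes_exactly_def
      by (intro exI[of _ r'] conjI r' exI[of _ g] ballI g gnz) (use fac r' in auto)
  qed
qed

lemma vanishes_to_cong:
  assumes "vanishes_to u K" "r > 0" "\<forall>t\<in>ball 0 r. u' t = u t" shows "vanishes_to u' K"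
proof -
  obtain r1 v where r1: "r1 > 0" and v: "v holomorphic_on ball 0 r1"
    and u: "\<forall>t\<in>ball 0 r1. u t = t^K * v t"
    using assms unfolding vanishes_to_def by blast
  show ?thesis unfolding vanishes_to_def
    by (intro exI[of _ "min r r1"] conjI exI[of _ v] ballI)
       (use assms r1 u in \<open>auto intro: holomorphic_on_subset[OF v]\<close>)
qed

lemma vanishes_exactly_cong:
  assumes "vanishes_exactly u K" "r > 0" "\<forall>t\<in>ball 0 r. u' t = u t" shows "vanishes_exactly u' K"
proof -
  obtain r1 v where r1: "r1 > 0" and v: "v holomorphic_on ball 0 r1" and v0: "v 0 \<noteq> 0"
    and u: "\<forall>t\<in>ball 0 r1. u t = t^K * v t"
    using assms unfolding vanishes_exactly_def by blast
  show ?thesis unfolding vanishes_exactly_def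
    by (intro exI[of _ "min r r1"] conjI exI[of _ v] ballI v0)
       (use assms r1 u in \<open>auto intro: holomorphic_on_subset[OF v]\<close>)
qed

lemma vanishes_to_zero_on: "r > 0 \<Longrightarrow> \<forall>t\<in>ball 0 r. u t = 0 \<Longrightarrow> vanishes_to u K"
  unfolding vanishes_to_def by (intro exI[of _ r] conjI exI[of _ "\<lambda>_. 0"]) auto

lemma vanishes_to_mono:
  assumes "vanishes_to u K" "K' \<le> K" shows "vanishes_to u K'"
proof -
  obtain r v where r: "r > 0" and v: "v holomorphic_on ball 0 r" and u: "\<forall>t\<in>ball 0 r. u t = t^K * v t"
    using assms unfolding vanishes_to_def by blast
  show ?thesis unfolding vanishes_to_def
  proof (intro exI[of _ r] conjI r exI[of _ "\<lambda>t. t^(K-K') * v t"] ballI)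
    show "(\<lambda>t. t^(K-K') * v t) holomorphic_on ball 0 r" using v by (auto intro!: holomorphic_intros)
    fix t :: complex assume "t \<in> ball 0 r"
    then show "u t = t^K' * (t^(K-K') * v t)"
      using u assms(2) by (simp add: mult.assoc[symmetric] power_add[symmetric])
  qed
qed

lemma vanishes_to_if_ord0_ge:
  assumes r: "r > 0" and hol: "u holomorphic_on ball 0 r" and K: "enat K \<le> ord0 u"
  shows "vanishes_to u K"
proof (cases "ord0 u")
  case (enat k)
  then have "vanishes_to u k"
    using vanishes_exactly_if_ord0_eq[OF r hol] vanishes_exactly_imp_vanishes_to by blast
  then show ?thesis by (rule vanishes_to_mono) (use K enat in simp)
next
  case infinity
  then show ?thesis using ord0_infinite_imp_zero[OF hol] r by (intro vanishes_to_zero_on) auto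
qed

lemma ord0_ge_if_vanishes_to_all:
  assumes "\<And>M. enat M \<le> N \<Longrightarrow> vanishes_to u M" shows "N \<le> ord0 u"
proof (cases N)
  case (enat n)
  then show ?thesis using assms ord0_ge_if_vanishes_to by auto
next
  case infinity
  have less: "enat M < ord0 u" for M
    using assms ord0_ge_if_vanishes_to[of u "Suc M"] infinity by (simp add: Suc_ile_eq)
  show ?thesis
  proof (cases "ord0 u")
    case (enat n)
    then show ?thesis using less[of n] by simp
  qed (simp add: infinity)
qed

lemma one_le_ord0: assumes "u 0 = 0" shows "1 \<le> ord0 u"
proof (cases "\<exists>k. (deriv ^^ k) u 0 \<noteq> 0")
  case True
  then have "(deriv ^^ (LEAST k. (deriv ^^ k) u 0 \<noteq> 0)) u 0 \<noteq> 0" by (rule LeastI_ex)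
  then have "(LEAST k. (deriv ^^ k) u 0 \<noteq> 0) \<noteq> 0" using assms by (metis funpow_0)
  then show ?thesis using True by (simp add: ord0_def one_enat_def)
qed (simp add: ord0_def)

lemma one_le_ord0_iff: "1 \<le> ord0 u \<longleftrightarrow> u 0 = 0"
proof
  assume le: "1 \<le> ord0 u"
  show "u 0 = 0"
  proof (rule ccontr)
    assume "u 0 \<noteq> 0"
    then have nz: "(deriv ^^ 0) u 0 \<noteq> 0" by simp
    then have "(LEAST k. (deriv ^^ k) u 0 \<noteq> 0) = 0" by (rule Least_eq_0)
    moreover have "\<exists>k. (deriv ^^ k) u 0 \<noteq> 0" using nz by blast
    ultimately have "ord0 u = 0" by (simp add: ord0_def zero_enat_def)
    then show False using le by simp
  qed
qed (rule one_le_ord0)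

lemma vanishes_to_add:
  assumes "vanishes_to u K" "vanishes_to u' K" shows "vanishes_to (\<lambda>t. u t + u' t) K"
proof -
  obtain r1 v where r1: "r1 > 0" and v: "v holomorphic_on ball 0 r1"
    and u: "\<forall>t\<in>ball 0 r1. u t = t^K * v t"
    using assms unfolding vanishes_to_def by blast
  obtain r2 v' where r2: "r2 > 0" and v': "v' holomorphic_on ball 0 r2"
    and u': "\<forall>t\<in>ball 0 r2. u' t = t^K * v' t"
    using assms unfolding vanishes_to_def by blast
  show ?thesis unfolding vanishes_to_def
  proof (intro exI[of _ "min r1 r2"] conjI exI[of _ "\<lambda>t. v t + v' t"] ballI)
    show "(\<lambda>t. v t + v' t) holomorphic_on ball 0 (min r1 r2)"
      by (intro holomorphic_intros holomorphic_on_subset[OF v] holomorphic_on_subset[OF v']) auto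
    fix t :: complex assume "t \<in> ball 0 (min r1 r2)"
    then show "u t + u' t = t^K * (v t + v' t)" using u u' by (simp add: distrib_left)
  qed (use r1 r2 in auto)
qed

lemma vanishes_to_mult:
  assumes "vanishes_to u K" "r > 0" "c holomorphic_on ball 0 r"
  shows "vanishes_to (\<lambda>t. c t * u t) K"
proof -
  obtain r1 v where r1: "r1 > 0" and v: "v holomorphic_on ball 0 r1"
    and u: "\<forall>t\<in>ball 0 r1. u t = t^K * v t"
    using assms unfolding vanishes_to_def by blast
  show ?thesis unfolding vanishes_to_def
  proof (intro exI[of _ "min r r1"] conjI exI[of _ "\<lambda>t. c t * v t"] ballI)
    show "(\<lambda>t. c t * v t) holomorphic_on ball 0 (min r r1)"
      by (intro holomorphic_intros holomorphic_on_subset[OF v] holomorphic_on_subset[OF assms(3)]) auto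
    fix t :: complex assume "t \<in> ball 0 (min r r1)"
    then show "c t * u t = t^K * (c t * v t)" using u by (simp add: algebra_simps)
  qed (use r1 assms in auto)
qed

lemma vanishes_to_cmult: "vanishes_to u K \<Longrightarrow> vanishes_to (\<lambda>t. c * u t) K"
  using vanishes_to_mult[of u K 1 "\<lambda>_. c"] by simp

lemma vanishes_to_sum:
  assumes "finite S" "\<And>i. i \<in> S \<Longrightarrow> vanishes_to (f i) K"
  shows "vanishes_to (\<lambda>t. \<Sum>i\<in>S. f i t) K"
  using assms
proof (induction S rule: finite_induct)
  case empty
  then show ?case using vanishes_to_zero_on[of 1] by simp
next
  case (insert x F)
  then show ?case using vanishes_to_add[of "f x" K "\<lambda>t. \<Sum>i\<in>F. f i t"] by simp
qed

lemma vanishes_to_times: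
  assumes "vanishes_to u n" "vanishes_to u' k" shows "vanishes_to (\<lambda>t. u t * u' t) (n + k)"
proof -
  obtain r1 v where r1: "r1 > 0" and v: "v holomorphic_on ball 0 r1"
    and u: "\<forall>t\<in>ball 0 r1. u t = t^n * v t"
    using assms unfolding vanishes_to_def by blast
  obtain r2 v' where r2: "r2 > 0" and v': "v' holomorphic_on ball 0 r2"
    and u': "\<forall>t\<in>ball 0 r2. u' t = t^k * v' t"
    using assms unfolding vanishes_to_def by blast
  show ?thesis unfolding vanishes_to_def
  proof (intro exI[of _ "min r1 r2"] conjI exI[of _ "\<lambda>t. v t * v' t"] ballI)
    show "(\<lambda>t. v t * v' t) holomorphic_on ball 0 (min r1 r2)"
      by (intro holomorphic_intros holomorphic_on_subset[OF v] holomorphic_on_subset[OF v']) auto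
    fix t :: complex assume "t \<in> ball 0 (min r1 r2)"
    then show "u t * u' t = t^(n+k) * (v t * v' t)" using u u' by (simp add: power_add algebra_simps)
  qed (use r1 r2 in auto)
qed

lemma vanishes_exactly_cmult:
  assumes "vanishes_exactly u K" "c \<noteq> 0" shows "vanishes_exactly (\<lambda>t. c * u t) K"
proof -
  obtain r v where r: "r > 0" and v: "v holomorphic_on ball 0 r" and v0: "v 0 \<noteq> 0"
    and u: "\<forall>t\<in>ball 0 r. u t = t^K * v t"
    using assms unfolding vanishes_exactly_def by blast
  show ?thesis unfolding vanishes_exactly_def
    by (intro exI[of _ r] conjI r exI[of _ "\<lambda>t. c * v t"] ballI)
       (use v v0 u assms(2) in \<open>auto intro!: holomorphic_intros simp: algebra_simps\<close>)
qed

lemma vanishes_exactly_add_higher: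
  assumes "vanishes_exactly u n" "vanishes_to u' (Suc n)" shows "vanishes_exactly (\<lambda>t. u t + u' t) n"
proof -
  obtain r1 v where r1: "r1 > 0" and v: "v holomorphic_on ball 0 r1" and v0: "v 0 \<noteq> 0"
    and u: "\<forall>t\<in>ball 0 r1. u t = t^n * v t"
    using assms unfolding vanishes_exactly_def by blast
  obtain r2 v' where r2: "r2 > 0" and v': "v' holomorphic_on ball 0 r2"
    and u': "\<forall>t\<in>ball 0 r2. u' t = t^(Suc n) * v' t"
    using assms unfolding vanishes_to_def by blast
  show ?thesis unfolding vanishes_exactly_def
  proof (intro exI[of _ "min r1 r2"] conjI exI[of _ "\<lambda>t. v t + t * v' t"] ballI)
    show "(\<lambda>t. v t + t * v' t) holomorphic_on ball 0 (min r1 r2)"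
      by (intro holomorphic_intros holomorphic_on_subset[OF v] holomorphic_on_subset[OF v']) auto
    show "v 0 + 0 * v' 0 \<noteq> 0" using v0 by simp
    fix t :: complex assume "t \<in> ball 0 (min r1 r2)"
    then show "u t + u' t = t^n * (v t + t * v' t)" using u u' by (simp add: algebra_simps)
  qed (use r1 r2 in auto)
qed

lemma continuous_maps_small_ball_into_ball:
  fixes u :: "complex \<Rightarrow> 'b::real_normed_vector"
  assumes uc: "continuous_on (ball 0 r) u" and r: "r > 0" and u0: "u 0 = 0" and \<rho>: "\<rho> > 0"
  shows "\<exists>r'>0. r' \<le> r \<and> (\<forall>t\<in>ball 0 r'. u t \<in> ball 0 \<rho>)"
proof -
  have op: "open (ball 0 r \<inter> u -` ball 0 \<rho>)"
    by (rule continuous_open_preimage[OF uc]) auto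
  have "0 \<in> ball 0 r \<inter> u -` ball 0 \<rho>" using u0 r \<rho> by auto
  then obtain r' where r': "r' > 0" and sub: "ball 0 r' \<subseteq> ball 0 r \<inter> u -` ball 0 \<rho>"
    using op openE by blast
  show ?thesis
    by (intro exI[of _ "min r' r"]) (use r' r sub in auto)
qed

lemma power_factor_compose:
  assumes rg: "rg > 0" and \<phi>: "\<phi> holomorphic_on ball 0 rg" and g: "\<forall>s\<in>ball 0 rg. g s = s^q * \<phi> s"
    and ru: "ru > 0" and V: "V holomorphic_on ball 0 ru" and u: "\<forall>t\<in>ball 0 ru. u t = t^k * V t"
    and k: "k > 0"
  shows "\<exists>r>0. (\<lambda>t. V t^q * \<phi> (u t)) holomorphic_on ball 0 r \<and>
          (\<forall>t\<in>ball 0 r. g (u t) = t^(q*k) * (V t^q * \<phi> (u t)))"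
proof -
  have uh: "u holomorphic_on ball 0 ru"
    by (rule holomorphic_transform[of "\<lambda>t. t^k * V t"]) (use V u in \<open>auto intro!: holomorphic_intros\<close>)
  have "u 0 = 0" using u ru k by auto
  then obtain r where r: "r > 0" "r \<le> ru" and sub: "\<forall>t\<in>ball 0 r. u t \<in> ball 0 rg"
    using continuous_maps_small_ball_into_ball[OF holomorphic_on_imp_continuous_on[OF uh] ru _ rg]
    by blast
  have "(\<lambda>t. V t^q * \<phi> (u t)) holomorphic_on ball 0 r"
  proof (intro holomorphic_intros)
    show "V holomorphic_on ball 0 r" using r by (intro holomorphic_on_subset[OF V]) auto
    have "(\<phi> \<circ> u) holomorphic_on ball 0 r"
      by (rule holomorphic_on_compose_gen[OF holomorphic_on_subset[OF uh] \<phi>]) (use r sub in auto)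
    then show "(\<lambda>t. \<phi> (u t)) holomorphic_on ball 0 r" by (simp add: o_def)
  qed
  moreover have "g (u t) = t^(q*k) * (V t^q * \<phi> (u t))" if t: "t \<in> ball 0 r" for t
  proof -
    have "g (u t) = (t^k * V t)^q * \<phi> (u t)" using g u sub t r by auto
    also have "\<dots> = t^(q*k) * (V t^q * \<phi> (u t))"
      by (simp add: power_mult_distrib power_mult[symmetric] mult.commute)
    finally show ?thesis .
  qed
  ultimately show ?thesis using r by blast
qed

lemma vanishes_to_compose:
  assumes "vanishes_to g q" "vanishes_to u k" "k > 0" shows "vanishes_to (\<lambda>t. g (u t)) (q*k)"
proof -
  obtain rg \<phi> where rg: "rg > 0" and \<phi>: "\<phi> holomorphic_on ball 0 rg"
    and g: "\<forall>s\<in>ball 0 rg. g s = s^q * \<phi> s"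
    using assms unfolding vanishes_to_def by blast
  obtain ru V where ru: "ru > 0" and V: "V holomorphic_on ball 0 ru"
    and u: "\<forall>t\<in>ball 0 ru. u t = t^k * V t"
    using assms unfolding vanishes_to_def by blast
  show ?thesis
    using power_factor_compose[OF rg \<phi> g ru V u assms(3)] unfolding vanishes_to_def by blast
qed

lemma vanishes_exactly_compose:
  assumes "vanishes_exactly g q" "vanishes_exactly u k" "k > 0"
  shows "vanishes_exactly (\<lambda>t. g (u t)) (q*k)"
proof -
  obtain rg \<phi> where rg: "rg > 0" and \<phi>: "\<phi> holomorphic_on ball 0 rg" and \<phi>0: "\<phi> 0 \<noteq> 0"
    and g: "\<forall>s\<in>ball 0 rg. g s = s^q * \<phi> s"
    using assms unfolding vanishes_exactly_def by blast
  obtain ru V where ru: "ru > 0" and V: "V holomorphic_on ball 0 ru" and V0: "V 0 \<noteq> 0"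
    and u: "\<forall>t\<in>ball 0 ru. u t = t^k * V t"
    using assms unfolding vanishes_exactly_def by blast
  obtain r where r: "r > 0" and h: "(\<lambda>t. V t^q * \<phi> (u t)) holomorphic_on ball 0 r"
    and e: "\<forall>t\<in>ball 0 r. g (u t) = t^(q*k) * (V t^q * \<phi> (u t))"
    using power_factor_compose[OF rg \<phi> g ru V u assms(3)] by blast
  have "u 0 = 0" using u ru assms(3) by auto
  then show ?thesis unfolding vanishes_exactly_def
    by (intro exI[of _ r] conjI r exI[of _ "\<lambda>t. V t^q * \<phi> (u t)"] h e) (use V0 \<phi>0 in simp)
qed

lemma vanishes_to_compose_ord0:
  assumes g: "holo1_near0 g" and u: "vanishes_to u k" and k: "k \<ge> 1"
    and M: "enat M \<le> ord0 g * enat k"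
  shows "vanishes_to (\<lambda>t. g (u t)) M"
proof -
  obtain rg where rg: "rg > 0" "g holomorphic_on ball 0 rg" using g unfolding holo1_near0_def by blast
  obtain q where q: "vanishes_to g q" and qM: "M \<le> q * k"
  proof (cases "ord0 g")
    case (enat q)
    then show ?thesis using that[of q] vanishes_to_if_ord0_ge[OF rg] M by simp
  next
    case infinity
    then show ?thesis using that[of M] vanishes_to_if_ord0_ge[OF rg] k by simp
  qed
  have "vanishes_to (\<lambda>t. g (u t)) (q * k)" using vanishes_to_compose[OF q u] k by simp
  then show ?thesis using qM by (rule vanishes_to_mono)
qed

section \<open>Curves and ideals\<close>

lemma continuous_on_curve:
  fixes z :: "complex \<Rightarrow> complex^'n"
  assumes "\<And>j. (\<lambda>t. z t $ j) holomorphic_on S"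
  shows "continuous_on S z"
proof -
  have "continuous_on S (\<lambda>t. \<chi> j. z t $ j)"
    by (intro continuous_on_vec_lambda holomorphic_on_imp_continuous_on assms)
  then show ?thesis by simp
qed

lemma has_derivative_curve:
  fixes z :: "complex \<Rightarrow> complex^'n"
  assumes d: "\<And>j. ((\<lambda>t. z t $ j) has_field_derivative d j) (at t)"
  shows "(z has_derivative (\<lambda>h. h *s (\<chi> j. d j))) (at t)"
  unfolding has_derivative_at_within
proof
  have "linear (\<lambda>h::complex. h *s (\<chi> j. d j))"
    by (rule linearI) (simp_all add: vec_eq_iff algebra_simps)
  then show "bounded_linear (\<lambda>h::complex. h *s (\<chi> j. d j))"
    by (rule linear_conv_bounded_linear[THEN iffD1])
  have c: "((\<lambda>y. (z y $ j - z t $ j - d j * (y - t)) /\<^sub>R norm (y - t)) \<longlongrightarrow> 0) (at t)" for j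
    using d[of j] unfolding has_field_derivative_def has_derivative_at_within by auto
  have "((\<lambda>y. \<chi> j. (z y $ j - z t $ j - d j * (y - t)) /\<^sub>R norm (y - t)) \<longlongrightarrow> (\<chi> j. 0)) (at t)"
    by (intro tendsto_vec_lambda c)
  moreover have "(\<lambda>y. \<chi> j. (z y $ j - z t $ j - d j * (y - t)) /\<^sub>R norm (y - t)) =
       (\<lambda>y. (z y - z t - (y - t) *s (\<chi> j. d j)) /\<^sub>R norm (y - t))"
    by (auto simp: vec_eq_iff algebra_simps)
  moreover have "(\<chi> j. (0::complex)) = (0::complex^'n)" by (simp add: vec_eq_iff)
  ultimately show "((\<lambda>y. (z y - z t - (y - t) *s (\<chi> j. d j)) /\<^sub>R norm (y - t)) \<longlongrightarrow> 0)
                     (at t within UNIV)"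
    by simp
qed

lemma holo_near0_compose_curve:
  fixes z :: "complex \<Rightarrow> complex^'n"
  assumes a: "holo_near0 a" and z0: "z 0 = 0" and rz: "rz > 0"
    and hz: "\<And>j. (\<lambda>t. z t $ j) holomorphic_on ball 0 rz"
  shows "\<exists>r>0. (\<lambda>t. a (z t)) holomorphic_on ball 0 r"
proof -
  obtain ra where ra: "ra > 0"
    and aD: "\<forall>x\<in>ball 0 ra. \<exists>D. (a has_derivative D) (at x) \<and> (\<forall>c v. D (c *s v) = c * D v)"
    using a unfolding holo_near0_def by blast
  obtain r where r: "r > 0" "r \<le> rz" and sm: "\<forall>t\<in>ball 0 r. z t \<in> ball 0 ra"
    using continuous_maps_small_ball_into_ball[OF continuous_on_curve[OF hz] rz z0 ra] by blast
  have "(\<lambda>t. a (z t)) field_differentiable (at t)" if t: "t \<in> ball 0 r" for t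
  proof -
    define d where "d = (\<chi> j. deriv (\<lambda>t. z t $ j) t)"
    obtain D where D: "(a has_derivative D) (at (z t))" and Dl: "\<forall>c v. D (c *s v) = c * D v"
      using aD sm t by blast
    have "((\<lambda>t. z t $ j) has_field_derivative deriv (\<lambda>t. z t $ j) t) (at t)" for j
      by (rule holomorphic_derivI[OF hz open_ball]) (use t r in auto)
    then have "(z has_derivative (\<lambda>h. h *s d)) (at t)"
      unfolding d_def by (rule has_derivative_curve)
    then have "((a \<circ> z) has_derivative D \<circ> (\<lambda>h. h *s d)) (at t)"
      by (rule diff_chain_at) (rule D)
    moreover have "D \<circ> (\<lambda>h. h *s d) = (*) (D d)"
      by (auto simp: Dl mult.commute)
    ultimately show ?thesis
      unfolding field_differentiable_def has_field_derivative_def o_def by auto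
  qed
  then have "(\<lambda>t. a (z t)) holomorphic_on ball 0 r"
    unfolding holomorphic_on_def using field_differentiable_at_within by blast
  then show ?thesis using r by blast
qed

lemma curve_components:
  fixes z :: "complex \<Rightarrow> complex^'n"
  assumes "z \<in> curves"
  obtains rz m where "rz > 0" "\<And>j. (\<lambda>t. z t $ j) holomorphic_on ball 0 rz" "z 0 = 0"
    "ordc z = enat m" "m \<ge> 1" "\<And>j. enat m \<le> ord0 (\<lambda>t. z t $ j)" "\<exists>j. ord0 (\<lambda>t. z t $ j) = enat m"
proof -
  have z0: "z 0 = 0" and fin: "\<exists>j. ord0 (\<lambda>t. z t $ j) \<noteq> \<infinity>"
    and hol: "\<forall>j. \<exists>r>0. (\<lambda>t. z t $ j) holomorphic_on ball 0 r"
    using assms unfolding curves_def holo1_near0_def by auto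
  obtain rr where "\<forall>j. rr j > 0 \<and> (\<lambda>t. z t $ j) holomorphic_on ball 0 (rr j)"
    using choice[OF hol] by blast
  then have rr: "\<And>j. rr j > 0" "\<And>j. (\<lambda>t. z t $ j) holomorphic_on ball 0 (rr j)"
    by auto
  define rz where "rz = Min (range rr)"
  have rz: "rz > 0" unfolding rz_def using rr(1) by (subst Min_gr_iff) auto
  have hz: "(\<lambda>t. z t $ j) holomorphic_on ball 0 rz" for j
  proof (rule holomorphic_on_subset[OF rr(2)[of j]])
    have "rz \<le> rr j" unfolding rz_def by (rule Min_le) auto
    then show "ball 0 rz \<subseteq> ball 0 (rr j)" by (rule subset_ball)
  qed
  define Ord where "Ord j = ord0 (\<lambda>t. z t $ j)" for j
  have ordc_le: "ordc z \<le> Ord j" for j unfolding ordc_def Ord_def[symmetric] by (intro Min_le) auto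
  have ordc_in: "ordc z \<in> range Ord" unfolding ordc_def Ord_def[symmetric] by (intro Min_in) auto
  obtain j0 where "Ord j0 \<noteq> \<infinity>" using fin Ord_def by auto
  then obtain m where m: "ordc z = enat m" using ordc_le[of j0] by (cases "ordc z") auto
  have "1 \<le> Ord j" for j unfolding Ord_def by (rule one_le_ord0) (simp add: z0)
  then have m1: "m \<ge> 1" using ordc_in m by (metis enat_ord_simps(1) imageE one_enat_def)
  show ?thesis
  proof (rule that[OF rz hz z0 m m1])
    show "\<And>j. enat m \<le> ord0 (\<lambda>t. z t $ j)" using ordc_le m Ord_def by metis
    show "\<exists>j. ord0 (\<lambda>t. z t $ j) = enat m" using ordc_in m Ord_def by auto
  qed
qed

lemma ordc_eq_1:
  fixes z :: "complex \<Rightarrow> complex^'n"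
  assumes "\<And>j. 1 \<le> ord0 (\<lambda>t. z t $ j)" and "ord0 (\<lambda>t. z t $ j0) = 1"
  shows "ordc z = 1"
  unfolding ordc_def
proof (rule antisym)
  show "Min (range (\<lambda>j. ord0 (\<lambda>t. z t $ j))) \<le> 1"
    using assms(2) by (metis Min_le finite rangeI finite_imageI)
  show "1 \<le> Min (range (\<lambda>j. ord0 (\<lambda>t. z t $ j)))"
    using assms(1) by (subst Min_ge_iff) auto
qed

lemma holo_near0_const: "holo_near0 (\<lambda>_. c)"
  unfolding holo_near0_def by (intro exI[of _ 1]) (auto intro!: exI[of _ "\<lambda>_. 0"])

lemma holo_near0_component: "holo_near0 (\<lambda>x::complex^'n. x $ j)"
  unfolding holo_near0_def
  by (intro exI[of _ 1]) (auto intro!: exI[of _ "\<lambda>v. v $ j"] bounded_linear_imp_has_derivative)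

lemma gen_ideal_generator: "k \<in> S \<Longrightarrow> k \<in> gen_ideal S"
  unfolding gen_ideal_def
  by (intro CollectI exI[of _ "[k]"] exI[of _ "[\<lambda>_. 1]"] conjI exI[of _ 1]) (auto simp: holo_near0_const)

lemma gen_ideal_add_mult:
  assumes "k1 \<in> S" "k2 \<in> S" "holo_near0 a"
  shows "(\<lambda>x. k1 x + a x * k2 x) \<in> gen_ideal S"
  unfolding gen_ideal_def
  by (intro CollectI exI[of _ "[k1, k2]"] exI[of _ "[\<lambda>_. 1, a]"] conjI exI[of _ 1])
     (auto simp: lessThan_Suc assms holo_near0_const)

lemma vanishes_to_gen_ideal:
  fixes z :: "complex \<Rightarrow> complex^'n"
  assumes z: "z \<in> curves" and G: "\<And>k. k \<in> G \<Longrightarrow> vanishes_to (\<lambda>t. k (z t)) K"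
    and h: "h \<in> gen_ideal G"
  shows "vanishes_to (\<lambda>t. h (z t)) K"
proof -
  obtain rz where rz: "rz > 0" and hz: "\<And>j. (\<lambda>t. z t $ j) holomorphic_on ball 0 rz" and z0: "z 0 = 0"
    by (rule curve_components[OF z]) blast
  obtain gs as r where len: "length as = length gs" and gsG: "set gs \<subseteq> G"
    and as: "\<forall>a\<in>set as. holo_near0 a"
    and r: "r > 0" and he: "\<forall>x\<in>ball 0 r. h x = (\<Sum>i<length gs. (as ! i) x * (gs ! i) x)"
    using h unfolding gen_ideal_def by blast
  have sum: "vanishes_to (\<lambda>t. \<Sum>i<length gs. (as ! i) (z t) * (gs ! i) (z t)) K"
  proof (rule vanishes_to_sum)
    fix i assume i: "i \<in> {..<length gs}"
    then have "holo_near0 (as ! i)" using as len by auto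
    then obtain ri where ri: "ri > 0" and hi: "(\<lambda>t. (as ! i) (z t)) holomorphic_on ball 0 ri"
      using holo_near0_compose_curve[OF _ z0 rz hz] by blast
    have "gs ! i \<in> G" using gsG i by auto
    then have "vanishes_to (\<lambda>t. (gs ! i) (z t)) K" by (rule G)
    then show "vanishes_to (\<lambda>t. (as ! i) (z t) * (gs ! i) (z t)) K"
      by (rule vanishes_to_mult[OF _ ri hi])
  qed simp
  obtain r' where r': "r' > 0" and small: "\<forall>t\<in>ball 0 r'. z t \<in> ball 0 r"
    using continuous_maps_small_ball_into_ball[OF continuous_on_curve[OF hz] rz z0 r] by blast
  have "\<forall>t\<in>ball 0 r'. h (z t) = (\<Sum>i<length gs. (as ! i) (z t) * (gs ! i) (z t))"
    using he small by blast
  then show ?thesis by (rule vanishes_to_cong[OF sum r'])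
qed

lemma T1_ge_if_smooth_curve:
  fixes zc :: "complex \<Rightarrow> complex^'n"
  assumes zc: "zc \<in> curves" and o1: "ordc zc = 1"
    and G: "\<And>M k. enat M \<le> N \<Longrightarrow> k \<in> G \<Longrightarrow> vanishes_to (\<lambda>t. k (zc t)) M"
  shows "ereal_of_enat N \<le> T1 (gen_ideal G)"
proof -
  have "ereal_of_enat N \<le> ereal_of_enat (ord0 (h \<circ> zc)) / ereal_of_enat (ordc zc)"
    if h: "h \<in> gen_ideal G" for h
  proof -
    have "N \<le> ord0 (h \<circ> zc)"
      using ord0_ge_if_vanishes_to_all vanishes_to_gen_ideal[OF zc G h] by (simp add: o_def)
    moreover have "ereal_of_enat (ordc zc) = 1" using o1 by (simp add: one_enat_def one_ereal_def)
    ultimately show ?thesis by simp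
  qed
  then have "ereal_of_enat N \<le> (INF h\<in>gen_ideal G. ereal_of_enat (ord0 (h \<circ> zc)) / ereal_of_enat (ordc zc))"
    by (rule INF_greatest)
  also have "\<dots> \<le> T1 (gen_ideal G)" unfolding T1_def by (rule SUP_upper[OF zc])
  finally show ?thesis .
qed

lemma T1_le_if_orders_bounded:
  fixes J :: "(complex^'n \<Rightarrow> complex) set"
  assumes "\<And>z r m. r > 0 \<Longrightarrow> (\<And>j. (\<lambda>t. z t $ j) holomorphic_on ball 0 r) \<Longrightarrow> m \<ge> 1 \<Longrightarrow>
      (\<And>j. enat m \<le> ord0 (\<lambda>t. z t $ j)) \<Longrightarrow> (\<exists>j. ord0 (\<lambda>t. z t $ j) = enat m) \<Longrightarrow>
      \<exists>h\<in>J. ord0 (h \<circ> z) \<le> enat (n * m)"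
  shows "T1 J \<le> ereal_of_enat (enat n)"
  unfolding T1_def
proof (rule SUP_least)
  fix z :: "complex \<Rightarrow> complex^'n" assume z: "z \<in> curves"
  obtain r m where "r > 0" "\<And>j. (\<lambda>t. z t $ j) holomorphic_on ball 0 r" and m: "ordc z = enat m" "m \<ge> 1"
    and "\<And>j. enat m \<le> ord0 (\<lambda>t. z t $ j)" "\<exists>j. ord0 (\<lambda>t. z t $ j) = enat m"
    by (rule curve_components[OF z]) blast
  then obtain h where h: "h \<in> J" and "ord0 (h \<circ> z) \<le> enat (n * m)" using assms by blast
  then obtain k where k: "ord0 (h \<circ> z) = enat k" "k \<le> n * m" by (cases "ord0 (h \<circ> z)") auto
  have "real k / real m \<le> real n"
    using k m by (simp add: pos_divide_le_eq of_nat_mult[symmetric] del: of_nat_mult)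
  then have "ereal_of_enat (ord0 (h \<circ> z)) / ereal_of_enat (ordc z) \<le> ereal_of_enat (enat n)"
    using k m by simp
  then show "(INF h\<in>J. ereal_of_enat (ord0 (h \<circ> z)) / ereal_of_enat (ordc z)) \<le> ereal_of_enat (enat n)"
    using h by (meson INF_lower2)
qed

section \<open>Generic hyperplanes\<close>

lemma lin_indep_1_iff: "lin_indep 1 ws \<longleftrightarrow> ws 0 \<noteq> 0"
proof
  assume "lin_indep 1 ws"
  then have "(\<Sum>i<1. c i *s ws i) = 0 \<Longrightarrow> c 0 = 0" for c :: "nat \<Rightarrow> complex"
    unfolding lin_indep_def by blast
  from this[of "\<lambda>_. 1"] show "ws 0 \<noteq> 0" by auto
next
  assume "ws 0 \<noteq> 0"
  then obtain j where j: "ws 0 $ j \<noteq> 0" by (metis vec_eq_iff zero_index)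
  show "lin_indep 1 ws" unfolding lin_indep_def
  proof (intro allI impI)
    fix c :: "nat \<Rightarrow> complex" and i :: nat assume "(\<Sum>i<1. c i *s ws i) = 0" and i: "i < 1"
    then have "c 0 *s ws 0 = 0" by simp
    then have "c 0 * ws 0 $ j = 0" by (metis vector_smult_component zero_index)
    then show "c i = 0" using j i by simp
  qed
qed

lemma linf_at_axis: "linf v (axis j 1) = v $ j"
proof -
  have "(\<lambda>i. v $ i * axis j 1 $ i) = (\<lambda>i. if i = j then v $ j else 0)" by (auto simp: axis_def)
  then show ?thesis unfolding linf_def by (simp only:) simp
qed

lemma linf_of_axis: "linf (axis j 1) x = x $ j"
proof -
  have "(\<lambda>i. axis j 1 $ i * x $ i) = (\<lambda>i. if i = j then x $ j else 0)" by (auto simp: axis_def)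
  then show ?thesis unfolding linf_def by (simp only:) simp
qed

definition axis_free_hyperplanes :: "(complex^'n) set set" where
  "axis_free_hyperplanes = {H \<in> grass 1. \<forall>j. axis j 1 \<notin> H}"

lemma zero_space_in_axis_free_hyperplanes_iff:
  "lin_indep 1 ws \<Longrightarrow> zero_space 1 ws \<in> axis_free_hyperplanes \<longleftrightarrow> (\<forall>j. ws 0 $ j \<noteq> 0)"
  unfolding axis_free_hyperplanes_def grass_def zero_space_def by (auto simp: linf_at_axis)

lemma zariski_open_axis_free_hyperplanes:
  "zariski_open_grass 1 (axis_free_hyperplanes :: (complex^'n) set set)"
  unfolding zariski_open_grass_def
proof (intro conjI exI[of _ "{\<lambda>ws::nat \<Rightarrow> complex^'n. \<Prod>j\<in>UNIV. ws 0 $ j}"])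
  show "axis_free_hyperplanes \<subseteq> (grass 1 :: (complex^'n) set set)"
    unfolding axis_free_hyperplanes_def by auto
  show "\<forall>P\<in>{\<lambda>ws::nat \<Rightarrow> complex^'n. \<Prod>j\<in>UNIV. ws 0 $ j}. tuple_poly 1 P"
    unfolding tuple_poly_def by (intro ballI exI[of _ "{\<lambda>_ _. 1}"] exI[of _ "\<lambda>_. 1"]) auto
  have "(\<not> lin_indep 1 ws \<or> zero_space 1 ws \<notin> axis_free_hyperplanes) \<longleftrightarrow> (\<Prod>j\<in>UNIV. ws 0 $ j) = 0"
    for ws :: "nat \<Rightarrow> complex^'n"
    using zero_space_in_axis_free_hyperplanes_iff[of ws] lin_indep_1_iff[of ws] by auto
  then show "\<forall>ws::nat \<Rightarrow> complex^'n. (\<not> lin_indep 1 ws \<or> zero_space 1 ws \<notin> axis_free_hyperplanes) =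
      (\<forall>P\<in>{\<lambda>ws::nat \<Rightarrow> complex^'n. \<Prod>j\<in>UNIV. ws 0 $ j}. P ws = 0)"
    by simp
qed

lemma axis_free_hyperplanes_nonempty: "(axis_free_hyperplanes :: (complex^'n) set set) \<noteq> {}"
proof -
  define ws :: "nat \<Rightarrow> complex^'n" where "ws = (\<lambda>_. \<chi> j. 1)"
  have "lin_indep 1 ws" unfolding lin_indep_1_iff ws_def by (simp add: vec_eq_iff)
  moreover have "\<forall>j. ws 0 $ j \<noteq> 0" by (simp add: ws_def)
  ultimately have "zero_space 1 ws \<in> axis_free_hyperplanes"
    using zero_space_in_axis_free_hyperplanes_iff by blast
  then show ?thesis by blast
qed

lemma zariski_open_contains_axis_free_hyperplane:
  fixes W :: "(complex^'n) set set"
  assumes ne: "W \<noteq> {}" and op: "zariski_open_grass 1 W"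
  shows "\<exists>ws. lin_indep 1 ws \<and> zero_space 1 ws \<in> W \<and> (\<forall>j. ws 0 $ j \<noteq> 0)"
proof -
  obtain F where F: "\<forall>P\<in>F. tuple_poly 1 P"
    and W: "\<forall>ws. (\<not> lin_indep 1 ws \<or> zero_space 1 ws \<notin> W) \<longleftrightarrow> (\<forall>P\<in>F. P ws = 0)"
    and sub: "W \<subseteq> grass 1"
    using op unfolding zariski_open_grass_def by blast
  obtain ws0 where "lin_indep 1 ws0" "zero_space 1 ws0 \<in> W" using ne sub unfolding grass_def by blast
  then obtain P where P: "P \<in> F" "P ws0 \<noteq> 0" using W by blast
  obtain A c where "\<forall>ws. P ws = (\<Sum>\<alpha>\<in>A. c \<alpha> * (\<Prod>i<1. \<Prod>j\<in>UNIV. (ws i $ j) ^ (\<alpha> i j)))"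
    using F P unfolding tuple_poly_def by blast
  \<comment> \<open>Shift ws0 along the diagonal: P stays non-zero for small real shifts, and only
    finitely many shifts make a coefficient vanish.\<close>
  define ws where "ws t = (\<lambda>i. ws0 i + complex_of_real t *s (\<chi> j. 1))" for t
  define Q where "Q t = P (ws t)" for t
  have "Q = (\<lambda>t. \<Sum>\<alpha>\<in>A. c \<alpha> * (\<Prod>i<1. \<Prod>j\<in>UNIV. (ws0 i $ j + complex_of_real t) ^ (\<alpha> i j)))"
    by (simp add: fun_eq_iff Q_def ws_def \<open>\<forall>ws. P ws = _\<close>)
  then have "isCont Q 0" by (simp only:) (intro continuous_intros)
  moreover have "Q 0 \<noteq> 0" using P by (simp add: Q_def ws_def)
  ultimately obtain e where e: "e > 0" and Q: "\<forall>y. dist 0 y < e \<longrightarrow> Q y \<noteq> 0"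
    using continuous_at_avoid by blast
  have "infinite ({0<..<e} - range (\<lambda>j. cmod (ws0 0 $ j)))"
    using e by (intro Diff_infinite_finite) auto
  then obtain t where t: "t \<in> {0<..<e}" "\<forall>j. t \<noteq> cmod (ws0 0 $ j)"
    using infinite_imp_nonempty by blast
  have "ws t 0 $ j \<noteq> 0" for j
  proof
    assume "ws t 0 $ j = 0"
    then have "ws0 0 $ j = - complex_of_real t" by (simp add: ws_def add_eq_0_iff)
    then have "cmod (ws0 0 $ j) = t" using t(1) by auto
    then show False using t(2) by blast
  qed
  moreover have "P (ws t) \<noteq> 0" using Q t by (simp add: Q_def)
  ultimately show ?thesis using W P(1) by blast
qed

lemma beta_2_eq_if_generic:
  fixes I :: "(complex^'n \<Rightarrow> complex) set"
  assumes "\<And>ws. lin_indep 1 ws \<Longrightarrow> \<forall>j. ws 0 $ j \<noteq> 0 \<Longrightarrow> T1 (add_lin I 1 ws) = \<beta>"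
  shows "beta 2 I = \<beta>"
proof -
  have one: "2 - 1 = (1::nat)" by simp
  have "is_generic_value 2 I \<beta>" unfolding is_generic_value_def one
  proof (intro exI[of _ axis_free_hyperplanes] conjI allI impI)
    fix ws :: "nat \<Rightarrow> complex^'n"
    assume "lin_indep 1 ws \<and> zero_space 1 ws \<in> axis_free_hyperplanes"
    then show "T1 (add_lin I 1 ws) = \<beta>"
      using assms zero_space_in_axis_free_hyperplanes_iff by blast
  qed (fact axis_free_hyperplanes_nonempty zariski_open_axis_free_hyperplanes)+
  moreover have "\<beta>' = \<beta>" if "is_generic_value 2 I \<beta>'" for \<beta>'
  proof -
    have "\<exists>W. W \<noteq> {} \<and> zariski_open_grass 1 W \<and>
        (\<forall>ws. lin_indep 1 ws \<and> zero_space 1 ws \<in> W \<longrightarrow> T1 (add_lin I 1 ws) = \<beta>')"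
      using that unfolding is_generic_value_def one .
    then obtain W where "W \<noteq> {}" "zariski_open_grass 1 W"
      and W: "\<forall>ws. lin_indep 1 ws \<and> zero_space 1 ws \<in> W \<longrightarrow> T1 (add_lin I 1 ws) = \<beta>'"
      by blast
    then obtain ws where "lin_indep 1 ws" "zero_space 1 ws \<in> W" "\<forall>j. ws 0 $ j \<noteq> 0"
      using zariski_open_contains_axis_free_hyperplane by blast
    then show "\<beta>' = \<beta>" using W assms by metis
  qed
  ultimately show ?thesis unfolding beta_def by (rule the_equality)
qed

section \<open>The ideal (f(x1) - x2 x3, g(x2))\<close>

definition fg_ideal :: "(complex \<Rightarrow> complex) \<Rightarrow> (complex \<Rightarrow> complex) \<Rightarrow> (complex^3 \<Rightarrow> complex) set" where
  "fg_ideal f g = gen_ideal {\<lambda>x. f (x $ 1) - x $ 2 * x $ 3, \<lambda>x. g (x $ 2)}"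

lemma add_lin_fg_ideal_generators:
  "(\<lambda>x. f (x $ 1) - x $ 2 * x $ 3) \<in> add_lin (fg_ideal f g) 1 ws"
  "(\<lambda>x. g (x $ 2)) \<in> add_lin (fg_ideal f g) 1 ws"
  "linf (ws 0) \<in> add_lin (fg_ideal f g) 1 ws"
  unfolding add_lin_def fg_ideal_def by (auto intro!: gen_ideal_generator)

lemma add_lin_x3_fg_ideal_contains_f:
  "(\<lambda>x. f (x $ 1)) \<in> add_lin (fg_ideal f g) 1 (\<lambda>_. axis 3 1)"
proof -
  have "(\<lambda>x. (f (x $ 1) - x $ 2 * x $ 3) + x $ 2 * linf (axis 3 1) x)
          \<in> add_lin (fg_ideal f g) 1 (\<lambda>_. axis 3 1)"
    unfolding add_lin_def fg_ideal_def
    by (intro gen_ideal_add_mult holo_near0_component) (auto intro: gen_ideal_generator)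
  then show ?thesis by (simp add: linf_of_axis)
qed

lemma smooth_graph_curve:
  assumes r: "r > 0" and z2: "z2 holomorphic_on ball 0 r" and z3: "z3 holomorphic_on ball 0 r"
    and "z2 0 = 0" "z3 0 = 0"
  shows "(\<lambda>t. vector [t, z2 t, z3 t] :: complex^3) \<in> curves"
    and "ordc (\<lambda>t. vector [t, z2 t, z3 t] :: complex^3) = 1"
proof -
  define z where "z t = (vector [t, z2 t, z3 t] :: complex^3)" for t
  have hz: "(\<lambda>t. z t $ j) holomorphic_on ball 0 r" for j
    using exhaust_3[of j] z2 z3 by (auto simp: z_def)
  have z0: "z 0 = 0" unfolding vec_eq_iff forall_3 using assms(4,5) by (simp add: z_def)
  have o1: "ord0 (\<lambda>t. z t $ 1) = 1"
    using ord0_eq_if_vanishes_exactly[OF vanishes_exactly_id] by (simp add: z_def one_enat_def)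
  show "(\<lambda>t. vector [t, z2 t, z3 t] :: complex^3) \<in> curves"
    unfolding z_def[symmetric] curves_def
  proof (intro CollectI conjI z0 allI exI[of _ 1])
    show "holo1_near0 (\<lambda>t. z t $ j)" for j unfolding holo1_near0_def using hz r by blast
  qed (simp add: o1)
  show "ordc (\<lambda>t. vector [t, z2 t, z3 t] :: complex^3) = 1"
    unfolding z_def[symmetric] by (rule ordc_eq_1[OF _ o1]) (simp add: one_le_ord0 z0)
qed

lemma T1_add_lin_fg_ideal_ge_if_smooth_curve:
  fixes zc :: "complex \<Rightarrow> complex^3"
  assumes zc: "zc \<in> curves" "ordc zc = 1"
    and F: "\<And>M. enat M \<le> N \<Longrightarrow> vanishes_to (\<lambda>t. f (zc t $ 1) - zc t $ 2 * zc t $ 3) M"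
    and G: "\<And>M. enat M \<le> N \<Longrightarrow> vanishes_to (\<lambda>t. g (zc t $ 2)) M"
    and W: "\<And>M. enat M \<le> N \<Longrightarrow> vanishes_to (\<lambda>t. linf (ws 0) (zc t)) M"
  shows "ereal_of_enat N \<le> T1 (add_lin (fg_ideal f g) 1 ws)"
  unfolding add_lin_def
proof (rule T1_ge_if_smooth_curve[OF zc])
  fix M k assume M: "enat M \<le> N" and "k \<in> fg_ideal f g \<union> {linf (ws i) |i. i < 1}"
  then consider "k \<in> fg_ideal f g" | "k = linf (ws 0)" by auto
  then show "vanishes_to (\<lambda>t. k (zc t)) M"
  proof cases
    case 1
    then show ?thesis unfolding fg_ideal_def
      by (rule vanishes_to_gen_ideal[OF zc(1), rotated]) (use F[OF M] G[OF M] in auto)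
  qed (simp add: W[OF M])
qed

lemma holomorphic_sqrt_near_one:
  assumes r: "r > 0" and \<epsilon>: "\<epsilon> holomorphic_on ball 0 r" and \<epsilon>0: "\<epsilon> 0 = 0"
  obtains r' R where "r' > 0" "r' \<le> r" "R holomorphic_on ball 0 r'" "R 0 = 1"
    "\<And>s. (R s)^2 = 1 - \<epsilon> s" "\<And>s. 1 + R s \<noteq> 0"
proof -
  obtain r' where r': "r' > 0" "r' \<le> r" and small: "\<forall>s\<in>ball 0 r'. \<epsilon> s \<in> ball 0 1"
    using continuous_maps_small_ball_into_ball[OF holomorphic_on_imp_continuous_on[OF \<epsilon>] r \<epsilon>0 zero_less_one]
    by blast
  define R where "R s = csqrt (1 - \<epsilon> s)" for s
  have "1 - \<epsilon> s \<notin> \<real>\<^sub>\<le>\<^sub>0" if "s \<in> ball 0 r'" for s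
  proof -
    have "norm (\<epsilon> s) < 1" using small that by (simp add: dist_norm)
    then have "Re (\<epsilon> s) < 1" using abs_Re_le_cmod[of "\<epsilon> s"] by linarith
    then show ?thesis by (simp add: complex_nonpos_Reals_iff)
  qed
  then have "R holomorphic_on ball 0 r'" unfolding R_def
    by (intro holomorphic_on_csqrt' holomorphic_intros holomorphic_on_subset[OF \<epsilon>]) (use r' in auto)
  moreover have "1 + R s \<noteq> 0" for s
  proof -
    have "Re (R s) \<ge> 0" unfolding R_def by (rule Re_csqrt)
    then have "Re (1 + R s) \<noteq> 0" by simp
    then show ?thesis by (metis zero_complex.sel(1))
  qed
  ultimately show ?thesis using that r' \<epsilon>0 by (simp add: R_def)
qed

lemma quadratic_root_identity:
  fixes a b c s \<psi> R :: complex
  assumes a: "a \<noteq> 0" and c: "c \<noteq> 0" and R: "R^2 = 1 - 4*b*c*\<psi>/a^2" and R1: "1 + R \<noteq> 0"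
  defines "Z \<equiv> -2*c * s*\<psi> / (a*(1+R))"
  shows "s^2*\<psi> - Z * (-(a * s + b*Z)/c) = 0"
proof -
  define D where "D = a*(1+R)"
  have D0: "D \<noteq> 0" using a R1 by (simp add: D_def)
  have ZD: "Z * D = -2*c * s*\<psi>" using D0 by (simp add: Z_def D_def)
  have e: "4*b*c*\<psi> = a^2 * (1 - R^2)" using R a by (simp add: field_simps)
  have "(c * s^2*\<psi> + Z*a * s + b*Z^2) * D^2 = c * s^2*\<psi>*D^2 + (Z*D)*a * s*D + b*(Z*D)^2"
    by (simp add: power2_eq_square algebra_simps)
  also have "\<dots> = c * s^2*\<psi>*(D^2 - 2*a*D + 4*b*c*\<psi>)"
    unfolding ZD by (simp add: power2_eq_square algebra_simps)
  also have "D^2 - 2*a*D + 4*b*c*\<psi> = 0"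
    unfolding e D_def by (simp add: power2_eq_square algebra_simps)
  finally have "c * s^2*\<psi> + Z*a * s + b*Z^2 = 0" using D0 by simp
  then show ?thesis using c by (simp add: field_simps power2_eq_square)
qed

lemma solution_curve_on_hyperplane:
  fixes f :: "complex \<Rightarrow> complex"
  assumes f: "vanishes_exactly f p" and p: "p \<ge> 3" and a: "a \<noteq> 0" and c: "c \<noteq> 0"
  obtains r Z2 Z3 where "r > 0" "Z2 holomorphic_on ball 0 r" "Z3 holomorphic_on ball 0 r"
    "Z2 0 = 0" "Z3 0 = 0" "vanishes_exactly Z2 (p - 1)"
    "\<And>s. s \<in> ball 0 r \<Longrightarrow> f s = Z2 s * Z3 s" "\<And>s. a * s + b * Z2 s + c * Z3 s = 0"
proof -
  obtain rf \<phi> where rf: "rf > 0" and \<phi>: "\<phi> holomorphic_on ball 0 rf" and \<phi>0: "\<phi> 0 \<noteq> 0"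
    and f_eq: "\<forall>s\<in>ball 0 rf. f s = s^p * \<phi> s"
    using f unfolding vanishes_exactly_def by blast
  define \<psi> where "\<psi> s = s^(p-2) * \<phi> s" for s
  have "(\<lambda>s. 4*b*c*\<psi> s/a^2) holomorphic_on ball 0 rf"
    unfolding \<psi>_def using \<phi> by (auto intro!: holomorphic_intros)
  moreover have "(\<lambda>s. 4*b*c*\<psi> s/a^2) 0 = 0" using p by (simp add: \<psi>_def)
  ultimately obtain r R where r: "r > 0" "r \<le> rf" and R: "R holomorphic_on ball 0 r"
    and R0: "R 0 = 1" and R2: "\<And>s. (R s)^2 = 1 - 4*b*c*\<psi> s/a^2" and R1: "\<And>s. 1 + R s \<noteq> 0"
    by (rule holomorphic_sqrt_near_one[OF rf]) blast
  \<comment> \<open>Z2 is the small root of b Z^2 + a s Z + c s^2 \<psi>(s) = 0, written as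
    -2 c s \<psi> / (a (1 + R)) so that b = 0 is allowed; R is holomorphic because the discriminant
    divided by (a s)^2 is the unit 1 - 4 b c \<psi>/a^2.\<close>
  define V where "V s = -2*c*\<phi> s/(a*(1+R s))" for s
  define Z2 where "Z2 s = s^(p-1) * V s" for s
  define Z3 where "Z3 s = -(a * s + b * Z2 s)/c" for s
  have \<phi>r: "\<phi> holomorphic_on ball 0 r" using r by (intro holomorphic_on_subset[OF \<phi>]) auto
  have V: "V holomorphic_on ball 0 r" unfolding V_def using a R1 by (intro holomorphic_intros \<phi>r R) auto
  have Z2: "Z2 holomorphic_on ball 0 r" unfolding Z2_def by (intro holomorphic_intros V)
  have Z3: "Z3 holomorphic_on ball 0 r" unfolding Z3_def using c by (intro holomorphic_intros Z2) auto
  have "vanishes_exactly Z2 (p - 1)" unfolding vanishes_exactly_def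
    by (intro exI[of _ r] conjI r exI[of _ V] V ballI) (use a c \<phi>0 R0 in \<open>simp_all add: V_def Z2_def\<close>)
  moreover have "f s = Z2 s * Z3 s" if s: "s \<in> ball 0 r" for s
  proof -
    have "p = 2 + (p - 2)" using p by simp
    then have "s^p = s^2 * s^(p-2)" by (metis power_add)
    then have fs: "f s = s^2 * \<psi> s" using f_eq s r by (simp add: \<psi>_def)
    have "p - 1 = Suc (p - 2)" using p by simp
    then have Z2s: "Z2 s = -2*c * s*\<psi> s / (a*(1+R s))"
      unfolding Z2_def V_def \<psi>_def by (simp add: algebra_simps)
    have "s^2 * \<psi> s - Z2 s * Z3 s = 0"
      unfolding Z3_def Z2s by (rule quadratic_root_identity[OF a c R2 R1])
    then show ?thesis using fs by simp
  qed
  moreover have "Z2 0 = 0" "Z3 0 = 0" using p by (simp_all add: Z2_def Z3_def)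
  moreover have "a * s + b * Z2 s + c * Z3 s = 0" for s using c by (simp add: Z3_def)
  ultimately show ?thesis using that r Z2 Z3 by blast
qed

lemma T1_generic_hyperplane_ge:
  fixes ws :: "nat \<Rightarrow> complex^3"
  assumes g: "holo1_near0 g" and f: "vanishes_exactly f p" and p: "p \<ge> 3"
    and a: "ws 0 $ 1 \<noteq> 0" and c: "ws 0 $ 3 \<noteq> 0"
  shows "ereal_of_enat (ord0 g * enat (p - 1)) \<le> T1 (add_lin (fg_ideal f g) 1 ws)"
proof -
  obtain r Z2 Z3 where r: "r > 0" and Z2: "Z2 holomorphic_on ball 0 r"
    and Z3: "Z3 holomorphic_on ball 0 r" and "Z2 0 = 0" "Z3 0 = 0"
    and Z2_order: "vanishes_exactly Z2 (p - 1)"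
    and fiber: "\<And>s. s \<in> ball 0 r \<Longrightarrow> f s = Z2 s * Z3 s"
    and hyperplane: "\<And>s. ws 0 $ 1 * s + ws 0 $ 2 * Z2 s + ws 0 $ 3 * Z3 s = 0"
    by (rule solution_curve_on_hyperplane[OF f p a c, where b = "ws 0 $ 2"]) blast
  define zc where "zc t = (vector [t, Z2 t, Z3 t] :: complex^3)" for t
  note curve = smooth_graph_curve[OF r Z2 Z3 \<open>Z2 0 = 0\<close> \<open>Z3 0 = 0\<close>, folded zc_def]
  show ?thesis
  proof (rule T1_add_lin_fg_ideal_ge_if_smooth_curve[OF curve])
    fix M assume M: "enat M \<le> ord0 g * enat (p - 1)"
    show "vanishes_to (\<lambda>t. f (zc t $ 1) - zc t $ 2 * zc t $ 3) M"
      by (rule vanishes_to_zero_on[OF r]) (simp add: zc_def fiber)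
    show "vanishes_to (\<lambda>t. linf (ws 0) (zc t)) M"
      by (rule vanishes_to_zero_on[OF r]) (use hyperplane in \<open>simp add: zc_def linf_def sum_3\<close>)
    have "vanishes_to (\<lambda>t. g (Z2 t)) M"
      by (rule vanishes_to_compose_ord0[OF g vanishes_exactly_imp_vanishes_to[OF Z2_order] _ M])
        (use p in simp)
    then show "vanishes_to (\<lambda>t. g (zc t $ 2)) M" by (simp add: zc_def)
  qed
qed

lemma T1_hyperplane_infinite_if_f_flat:
  fixes ws :: "nat \<Rightarrow> complex^3"
  assumes f: "holo1_near0 f" "ord0 f = \<infinity>" and g0: "g 0 = 0" and c: "ws 0 $ 3 \<noteq> 0"
  shows "T1 (add_lin (fg_ideal f g) 1 ws) = \<infinity>"
proof -
  obtain rf where rf: "rf > 0" "f holomorphic_on ball 0 rf" using f unfolding holo1_near0_def by blast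
  define \<kappa> where "\<kappa> = - ws 0 $ 1 / ws 0 $ 3"
  define zc where "zc t = (vector [t, 0, \<kappa> * t] :: complex^3)" for t
  have hol: "(\<lambda>_. 0) holomorphic_on ball 0 rf" "(\<lambda>t. \<kappa> * t) holomorphic_on ball 0 rf"
    by (auto intro!: holomorphic_intros)
  note curve = smooth_graph_curve[OF rf(1) hol refl mult_zero_right, folded zc_def]
  have "ereal_of_enat \<infinity> \<le> T1 (add_lin (fg_ideal f g) 1 ws)"
  proof (rule T1_add_lin_fg_ideal_ge_if_smooth_curve[OF curve])
    fix M
    show "vanishes_to (\<lambda>t. f (zc t $ 1) - zc t $ 2 * zc t $ 3) M"
      using vanishes_to_if_ord0_ge[OF rf] f(2) by (simp add: zc_def)
    show "vanishes_to (\<lambda>t. g (zc t $ 2)) M"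
      by (rule vanishes_to_zero_on[OF rf(1)]) (simp add: zc_def g0)
    show "vanishes_to (\<lambda>t. linf (ws 0) (zc t)) M"
      by (rule vanishes_to_zero_on[OF rf(1)]) (use c in \<open>simp add: zc_def linf_def sum_3 \<kappa>_def\<close>)
  qed
  then show ?thesis by simp
qed

lemma hyperplane_coordinates_vanish_exactly:
  fixes u1 u2 u3 :: "complex \<Rightarrow> complex"
  assumes a: "a \<noteq> 0" and c: "c \<noteq> 0"
    and w: "vanishes_to (\<lambda>t. a * u1 t + b * u2 t + c * u3 t) (Suc m)"
    and u2: "vanishes_to u2 (Suc m)"
    and r: "r > 0" and u3: "u3 holomorphic_on ball 0 r" and m3: "enat m \<le> ord0 u3"
    and m: "ord0 u1 = enat m \<or> ord0 u2 = enat m \<or> ord0 u3 = enat m"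
  shows "vanishes_exactly u1 m" and "vanishes_exactly u3 m"
proof -
  have u1: "u1 t = (-c/a) * u3 t + ((1/a) * (a * u1 t + b * u2 t + c * u3 t) + (-b/a) * u2 t)" for t
    using a by (simp add: field_simps)
  have "ord0 u3 = enat m"
  proof (rule ccontr)
    assume "ord0 u3 \<noteq> enat m"
    then have "enat (Suc m) \<le> ord0 u3" using m3 by (simp add: Suc_ile_eq)
    then have u3': "vanishes_to u3 (Suc m)" by (rule vanishes_to_if_ord0_ge[OF r u3])
    have "vanishes_to (\<lambda>t. (-c/a) * u3 t + ((1/a) * (a * u1 t + b * u2 t + c * u3 t) + (-b/a) * u2 t))
        (Suc m)"
      by (intro vanishes_to_add vanishes_to_cmult w u2 u3')
    then have "vanishes_to u1 (Suc m)" by (rule vanishes_to_cong[of _ _ 1]) (simp, intro ballI u1)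
    then show False
      using m ord0_ge_if_vanishes_to[of u1 "Suc m"] ord0_ge_if_vanishes_to[OF u2] \<open>ord0 u3 \<noteq> enat m\<close>
      by auto
  qed
  then show u3x: "vanishes_exactly u3 m" by (rule vanishes_exactly_if_ord0_eq[OF r u3])
  have "vanishes_exactly (\<lambda>t. (-c/a) * u3 t + ((1/a) * (a * u1 t + b * u2 t + c * u3 t) + (-b/a) * u2 t)) m"
    by (intro vanishes_exactly_add_higher vanishes_exactly_cmult u3x vanishes_to_add vanishes_to_cmult w u2)
      (use a c in simp)
  then show "vanishes_exactly u1 m"
    by (rule vanishes_exactly_cong[of _ _ 1]) (simp, intro ballI u1)
qed

lemma vanishes_exactly_diff_product:
  assumes f: "vanishes_exactly f p" and p: "p \<ge> 1" and u1: "vanishes_exactly u1 m" and m: "m \<ge> 1"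
    and u2: "vanishes_to u2 (Suc ((p - 1) * m))" and u3: "vanishes_to u3 m"
  shows "vanishes_exactly (\<lambda>t. f (u1 t) - u2 t * u3 t) (p * m)"
proof -
  have "vanishes_exactly (\<lambda>t. f (u1 t)) (p * m)" using vanishes_exactly_compose[OF f u1] m by simp
  moreover have "vanishes_to (\<lambda>t. -1 * (u2 t * u3 t)) (Suc ((p - 1) * m) + m)"
    by (intro vanishes_to_cmult vanishes_to_times u2 u3)
  moreover have "Suc ((p - 1) * m) + m = Suc (p * m)" using p by (cases p) auto
  ultimately show ?thesis using vanishes_exactly_add_higher by fastforce
qed

lemma order_bound_on_generic_hyperplane:
  fixes u1 u2 u3 :: "complex \<Rightarrow> complex"
  assumes f: "vanishes_exactly f p" and p: "p \<ge> 3" and g: "vanishes_exactly g q"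
    and a: "a \<noteq> 0" and c: "c \<noteq> 0" and r: "r > 0" and u2: "u2 holomorphic_on ball 0 r"
    and u3: "u3 holomorphic_on ball 0 r" and w: "(\<lambda>t. a * u1 t + b * u2 t + c * u3 t) holomorphic_on ball 0 r"
    and m1: "m \<ge> 1" and ge: "enat m \<le> ord0 u2" "enat m \<le> ord0 u3"
    and m: "ord0 u1 = enat m \<or> ord0 u2 = enat m \<or> ord0 u3 = enat m"
  shows "ord0 (\<lambda>t. g (u2 t)) \<le> enat (q * (p - 1) * m)
    \<or> ord0 (\<lambda>t. a * u1 t + b * u2 t + c * u3 t) \<le> enat m
    \<or> ord0 (\<lambda>t. f (u1 t) - u2 t * u3 t) = enat (p * m)"
proof (cases "ord0 u2 \<le> enat ((p - 1) * m)")
  case True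
  then obtain k where k: "ord0 u2 = enat k" "k \<le> (p - 1) * m" by (cases "ord0 u2") auto
  have "k > 0" using ge(1) k m1 by simp
  moreover have "vanishes_exactly u2 k" by (rule vanishes_exactly_if_ord0_eq[OF r u2 k(1)])
  ultimately have "ord0 (\<lambda>t. g (u2 t)) = enat (q * k)"
    by (intro ord0_eq_if_vanishes_exactly vanishes_exactly_compose[OF g])
  moreover have "q * k \<le> q * (p - 1) * m" using k(2) by (simp add: mult.assoc)
  ultimately show ?thesis by simp
next
  case u2_high: False
  show ?thesis
  proof (cases "ord0 (\<lambda>t. a * u1 t + b * u2 t + c * u3 t) \<le> enat m")
    case w_high: False
    have "1 \<le> p - 1" using p by arith
    then have "m \<le> (p - 1) * m" by simp
    have u2': "vanishes_to u2 (Suc ((p - 1) * m))"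
      using vanishes_to_if_ord0_ge[OF r u2] u2_high by (simp add: Suc_ile_eq not_le)
    have "vanishes_to (\<lambda>t. a * u1 t + b * u2 t + c * u3 t) (Suc m)"
      using vanishes_to_if_ord0_ge[OF r w] w_high by (simp add: Suc_ile_eq not_le)
    moreover have "vanishes_to u2 (Suc m)"
      using u2' by (rule vanishes_to_mono) (use \<open>m \<le> (p - 1) * m\<close> in simp)
    ultimately have "vanishes_exactly u1 m" "vanishes_exactly u3 m"
      using hyperplane_coordinates_vanish_exactly[OF a c _ _ r u3 ge(2) m] by blast+
    then have "vanishes_exactly (\<lambda>t. f (u1 t) - u2 t * u3 t) (p * m)"
      using vanishes_exactly_diff_product[OF f _ _ m1 u2'] vanishes_exactly_imp_vanishes_to p by simp
    then show ?thesis using ord0_eq_if_vanishes_exactly by blast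
  qed simp
qed

lemma T1_generic_hyperplane_le:
  fixes ws :: "nat \<Rightarrow> complex^3"
  assumes f: "vanishes_exactly f p" and p: "p \<ge> 3" and g: "vanishes_exactly g q" and q: "q \<ge> 2"
    and a: "ws 0 $ 1 \<noteq> 0" and c: "ws 0 $ 3 \<noteq> 0"
  shows "T1 (add_lin (fg_ideal f g) 1 ws) \<le> ereal_of_enat (enat (q * (p - 1)))"
proof (rule T1_le_if_orders_bounded)
  fix z :: "complex \<Rightarrow> complex^3" and r m
  assume r: "r > 0" and hz: "\<And>j. (\<lambda>t. z t $ j) holomorphic_on ball 0 r" and m1: "m \<ge> 1"
    and ge: "\<And>j. enat m \<le> ord0 (\<lambda>t. z t $ j)" and "\<exists>j. ord0 (\<lambda>t. z t $ j) = enat m"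
  then have m: "ord0 (\<lambda>t. z t $ 1) = enat m \<or> ord0 (\<lambda>t. z t $ 2) = enat m \<or> ord0 (\<lambda>t. z t $ 3) = enat m"
    using exhaust_3 by metis
  have w: "linf (ws 0) \<circ> z = (\<lambda>t. ws 0 $ 1 * z t $ 1 + ws 0 $ 2 * z t $ 2 + ws 0 $ 3 * z t $ 3)"
    by (simp add: fun_eq_iff linf_def sum_3)
  have "(\<lambda>t. ws 0 $ 1 * z t $ 1 + ws 0 $ 2 * z t $ 2 + ws 0 $ 3 * z t $ 3) holomorphic_on ball 0 r"
    by (intro holomorphic_intros hz)
  note bound = order_bound_on_generic_hyperplane[OF f p g a c r hz hz this m1 ge ge m]
  have "m \<le> q * (p - 1) * m" and "p * m \<le> q * (p - 1) * m"
  proof -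
    have "p \<le> 2 * (p - 1)" using p by simp
    also have "\<dots> \<le> q * (p - 1)" using q by simp
    finally show "p * m \<le> q * (p - 1) * m" by simp
    moreover have "1 * m \<le> p * m" using p by (intro mult_le_mono1) simp
    ultimately show "m \<le> q * (p - 1) * m" by linarith
  qed
  note le_trans' = order_trans[OF _ iffD2[OF enat_ord_simps(1)]]
  from bound show "\<exists>h\<in>add_lin (fg_ideal f g) 1 ws. ord0 (h \<circ> z) \<le> enat (q * (p - 1) * m)"
  proof (elim disjE)
    assume "ord0 (\<lambda>t. g (z t $ 2)) \<le> enat (q * (p - 1) * m)"
    then show ?thesis by (intro bexI[OF _ add_lin_fg_ideal_generators(2)]) (simp add: o_def)
  next
    assume "ord0 (\<lambda>t. ws 0 $ 1 * z t $ 1 + ws 0 $ 2 * z t $ 2 + ws 0 $ 3 * z t $ 3) \<le> enat m"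
    then have "ord0 (linf (ws 0) \<circ> z) \<le> enat (q * (p - 1) * m)"
      unfolding w using \<open>m \<le> q * (p - 1) * m\<close> by (rule le_trans')
    then show ?thesis by (rule bexI[OF _ add_lin_fg_ideal_generators(3)])
  next
    assume "ord0 (\<lambda>t. f (z t $ 1) - z t $ 2 * z t $ 3) = enat (p * m)"
    then have "ord0 ((\<lambda>x. f (x $ 1) - x $ 2 * x $ 3) \<circ> z) \<le> enat (q * (p - 1) * m)"
      using \<open>p * m \<le> q * (p - 1) * m\<close> by (simp add: o_def)
    then show ?thesis by (rule bexI[OF _ add_lin_fg_ideal_generators(1)])
  qed
qed

lemma T1_coordinate_hyperplane_le_max:
  assumes f: "vanishes_exactly f p" and p: "p \<ge> 1" and g: "vanishes_exactly g q"
  shows "T1 (add_lin (fg_ideal f g) 1 (\<lambda>_. axis 3 1)) \<le> ereal_of_enat (enat (max p q))"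
proof (rule T1_le_if_orders_bounded)
  fix z :: "complex \<Rightarrow> complex^3" and r m
  assume r: "r > 0" and hz: "\<And>j. (\<lambda>t. z t $ j) holomorphic_on ball 0 r" and m1: "m \<ge> 1"
    and "\<exists>j. ord0 (\<lambda>t. z t $ j) = enat m"
  then obtain j where j: "vanishes_exactly (\<lambda>t. z t $ j) m"
    using vanishes_exactly_if_ord0_eq[OF r hz] by blast
  consider "j = 1" | "j = 2" | "j = 3" using exhaust_3 by blast
  then show "\<exists>h\<in>add_lin (fg_ideal f g) 1 (\<lambda>_. axis 3 1). ord0 (h \<circ> z) \<le> enat (max p q * m)"
  proof cases
    case 1
    then have "ord0 ((\<lambda>x. f (x $ 1)) \<circ> z) = enat (p * m)"
      using ord0_eq_if_vanishes_exactly vanishes_exactly_compose[OF f j] m1 by (simp add: o_def)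
    then show ?thesis using add_lin_x3_fg_ideal_contains_f by force
  next
    case 2
    then have "ord0 ((\<lambda>x. g (x $ 2)) \<circ> z) = enat (q * m)"
      using ord0_eq_if_vanishes_exactly vanishes_exactly_compose[OF g j] m1 by (simp add: o_def)
    then show ?thesis using add_lin_fg_ideal_generators(2) by force
  next
    case 3
    then have "ord0 (linf (axis 3 1) \<circ> z) = enat m"
      using ord0_eq_if_vanishes_exactly[OF j] by (simp add: o_def linf_of_axis)
    moreover have "m \<le> max p q * m" using p by (simp add: le_max_iff_disj)
    ultimately show ?thesis using add_lin_fg_ideal_generators(3)[where ws = "\<lambda>_. axis 3 1"] by force
  qed
qed

lemma T1_coordinate_hyperplane_le:
  assumes f: "holo1_near0 f" "ord0 f \<ge> 1" and g: "holo1_near0 g"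
  shows "T1 (add_lin (fg_ideal f g) 1 (\<lambda>_. axis 3 1)) \<le> ereal_of_enat (max (ord0 f) (ord0 g))"
proof (cases "ord0 f = \<infinity> \<or> ord0 g = \<infinity>")
  case False
  then obtain p q where p: "ord0 f = enat p" and q: "ord0 g = enat q" by auto
  obtain rf rg where "rf > 0" "f holomorphic_on ball 0 rf" "rg > 0" "g holomorphic_on ball 0 rg"
    using f(1) g unfolding holo1_near0_def by blast
  then have "vanishes_exactly f p" and "vanishes_exactly g q"
    using vanishes_exactly_if_ord0_eq p q by blast+
  moreover have "p \<ge> 1" using f(2) p by (simp add: one_enat_def)
  ultimately show ?thesis using T1_coordinate_hyperplane_le_max p q by simp
next
  case True
  then have "max (ord0 f) (ord0 g) = \<infinity>" by auto
  then show ?thesis by simp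
qed

lemma T1_generic_hyperplane_eq:
  fixes ws :: "nat \<Rightarrow> complex^3"
  assumes f: "holo1_near0 f" "ord0 f \<ge> 3" and g: "holo1_near0 g" "ord0 g \<ge> 2"
    and a: "ws 0 $ 1 \<noteq> 0" and c: "ws 0 $ 3 \<noteq> 0"
  shows "T1 (add_lin (fg_ideal f g) 1 ws) = ereal_of_enat (ord0 g * (ord0 f - 1))"
proof -
  have "(1::enat) \<le> 2" by simp
  then have "1 \<le> ord0 g" using g(2) by (rule order_trans)
  then have g0: "g 0 = 0" using one_le_ord0_iff by blast
  have "ord0 g \<noteq> 0" using \<open>1 \<le> ord0 g\<close> by (cases "ord0 g") (auto simp: one_enat_def zero_enat_def)
  show ?thesis
  proof (cases "ord0 f")
    case infinity
    then have "ord0 g * (ord0 f - 1) = \<infinity>" using \<open>ord0 g \<noteq> 0\<close> by (simp add: imult_is_infinity)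
    then show ?thesis using T1_hyperplane_infinite_if_f_flat[where g = g and ws = ws, OF f(1) infinity g0 c] by simp
  next
    case (enat p)
    have p: "p \<ge> 3" using f(2) enat by (simp add: numeral_eq_enat)
    have "ord0 f - 1 = enat (p - 1)" using enat by (simp add: one_enat_def)
    obtain rf where "rf > 0" "f holomorphic_on ball 0 rf" using f(1) unfolding holo1_near0_def by blast
    then have fx: "vanishes_exactly f p" using vanishes_exactly_if_ord0_eq enat by blast
    have lb: "ereal_of_enat (ord0 g * (ord0 f - 1)) \<le> T1 (add_lin (fg_ideal f g) 1 ws)"
      using T1_generic_hyperplane_ge[where ws = ws, OF g(1) fx p a c] \<open>ord0 f - 1 = enat (p - 1)\<close> by simp
    show ?thesis
    proof (cases "ord0 g")
      case infinity
      then have "ord0 g * (ord0 f - 1) = \<infinity>"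
        using p \<open>ord0 f - 1 = enat (p - 1)\<close> by (simp add: imult_is_infinity zero_enat_def)
      then show ?thesis using lb by simp
    next
      case (enat q)
      have q: "q \<ge> 2" using g(2) enat by (simp add: numeral_eq_enat)
      obtain rg where "rg > 0" "g holomorphic_on ball 0 rg" using g(1) unfolding holo1_near0_def by blast
      then have gx: "vanishes_exactly g q" using vanishes_exactly_if_ord0_eq enat by blast
      have "T1 (add_lin (fg_ideal f g) 1 ws) \<le> ereal_of_enat (ord0 g * (ord0 f - 1))"
        using T1_generic_hyperplane_le[where ws = ws, OF fx p gx q a c] enat \<open>ord0 f - 1 = enat (p - 1)\<close> by simp
      then show ?thesis using lb by (rule antisym)
    qed
  qed
qed

lemma max_le_mult_pred_enat:
  fixes p q :: enat
  assumes "p \<ge> 3" "q \<ge> 2"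
  shows "max p (q * (p - 1)) = q * (p - 1)"
proof (cases p)
  case (enat p')
  then have p3: "p' \<ge> 3" using assms by (simp add: numeral_eq_enat)
  show ?thesis
  proof (cases q)
    case (enat q')
    then have "q' \<ge> 2" using assms by (simp add: numeral_eq_enat)
    then have "p' \<le> q' * (p' - 1)" using p3 mult_le_mono1[of 2 q' "p' - 1"] by linarith
    then show ?thesis using \<open>p = enat p'\<close> enat by (simp add: one_enat_def max_def)
  next
    case infinity
    have "p - 1 \<noteq> 0" using p3 enat by (simp add: one_enat_def zero_enat_def)
    then have "\<infinity> * (p - 1) = \<infinity>" using imult_is_infinity by blast
    then show ?thesis using infinity by simp
  qed
next
  case infinity
  have "q \<noteq> 0" using assms(2) by (auto simp: zero_enat_def)
  then have "q * (p - 1) = \<infinity>" using infinity by (simp add: imult_is_infinity)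
  then show ?thesis by simp
qed

theorem mainTheorem9:
  fixes f g :: "complex \<Rightarrow> complex"
  assumes "holo1_near0 f" and "holo1_near0 g"
    and "ord0 f \<ge> 3" and "ord0 g \<ge> 2"
  defines "I \<equiv> gen_ideal {(\<lambda>x::complex^3. f (x $ 1) - x $ 2 * x $ 3), (\<lambda>x. g (x $ 2))}"
  shows "Tq 2 I \<le> ereal_of_enat (max (ord0 f) (ord0 g))
    \<and> beta 2 I = ereal_of_enat (max (ord0 f) (ord0 g * (ord0 f - 1)))
    \<and> max (ord0 f) (ord0 g * (ord0 f - 1)) = ord0 g * (ord0 f - 1)"
proof -
  have I: "I = fg_ideal f g" unfolding I_def fg_ideal_def ..
  have "(1::enat) \<le> 3" by simp
  then have "1 \<le> ord0 f" using assms(3) by (rule order_trans)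
  have "Tq 2 I \<le> T1 (add_lin I (2 - 1) (\<lambda>_. axis 3 1))" unfolding Tq_def by (rule INF_lower) simp
  also have "\<dots> \<le> ereal_of_enat (max (ord0 f) (ord0 g))"
    using T1_coordinate_hyperplane_le[OF assms(1) \<open>1 \<le> ord0 f\<close> assms(2)] unfolding I by simp
  finally have Tq: "Tq 2 I \<le> ereal_of_enat (max (ord0 f) (ord0 g))" .
  have beta: "beta 2 I = ereal_of_enat (ord0 g * (ord0 f - 1))"
    unfolding I
  proof (rule beta_2_eq_if_generic)
    fix ws :: "nat \<Rightarrow> complex^3" assume "\<forall>j. ws 0 $ j \<noteq> 0"
    then show "T1 (add_lin (fg_ideal f g) 1 ws) = ereal_of_enat (ord0 g * (ord0 f - 1))"
      by (intro T1_generic_hyperplane_eq assms) auto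
  qed
  have max: "max (ord0 f) (ord0 g * (ord0 f - 1)) = ord0 g * (ord0 f - 1)"
    by (rule max_le_mult_pred_enat[OF assms(3,4)])
  show ?thesis using Tq beta max by simp
qed

end
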